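(* Let $G$ be a group and $c\in G$. If the set $\{(x,y)\in G^2:[x,y]=c\}$ is $4$-large in $G^2$, then $G$ is abelian and $c=1$. Consequently, if $\mu$ is a left-invariant probability measure on some algebra of subsets of $G^2$ with inner measure $\mu_*$, and $G$ is not abelian or $c\ne1$, then $\mu_*(\{(x,y)\in G^2:[x,y]=c\})\le\frac34$.
   Context: $[x,y]=x^{-1}y^{-1}xy$. A subset $X$ of a group $K$ is $k$-large in $K$ if the intersection of any $k$ left translates $a_1X\cap\dots\cap a_kX$ ($a_i\in K$) is non-empty. The inner measure is $\mu_*(X)=\sup\{\mu(Y):Y\subseteq X\text{ measurable}\}$. *)

theory Defs
  imports "HOL-Algebra.Coset" "HOL-Analysis.Sigma_Algebra"
begin

definition commutator :: "('a, 'b) monoid_scheme \<Rightarrow> 'a \<Rightarrow> 'a \<Rightarrow> 'a" where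
  "commutator G x y = inv\<^bsub>G\<^esub> x \<otimes>\<^bsub>G\<^esub> inv\<^bsub>G\<^esub> y \<otimes>\<^bsub>G\<^esub> x \<otimes>\<^bsub>G\<^esub> y"

definition commutator_set :: "('a, 'b) monoid_scheme \<Rightarrow> 'a \<Rightarrow> ('a \<times> 'a) set" where
  "commutator_set G c = {(x, y). x \<in> carrier G \<and> y \<in> carrier G \<and> commutator G x y = c}"

definition k_large :: "('a, 'b) monoid_scheme \<Rightarrow> nat \<Rightarrow> 'a set \<Rightarrow> bool" where
  "k_large K k X \<longleftrightarrow> X \<subseteq> carrier K \<and>
     (\<forall>a. (\<forall>i<k. a i \<in> carrier K) \<longrightarrow> (\<Inter>i<k. a i <#\<^bsub>K\<^esub> X) \<noteq> {})"

definition left_invariant_prob :: "('a, 'b) monoid_scheme \<Rightarrow> 'a set set \<Rightarrow> ('a set \<Rightarrow> real) \<Rightarrow> bool" where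
  "left_invariant_prob K M \<mu> \<longleftrightarrow>
     algebra (carrier K) M \<and>
     (\<forall>Y\<in>M. 0 \<le> \<mu> Y) \<and>
     (\<forall>Y\<in>M. \<forall>Z\<in>M. Y \<inter> Z = {} \<longrightarrow> \<mu> (Y \<union> Z) = \<mu> Y + \<mu> Z) \<and>
     \<mu> (carrier K) = 1 \<and>
     (\<forall>g\<in>carrier K. \<forall>Y\<in>M. g <#\<^bsub>K\<^esub> Y \<in> M \<and> \<mu> (g <#\<^bsub>K\<^esub> Y) = \<mu> Y)"

definition inner_measure :: "'a set set \<Rightarrow> ('a set \<Rightarrow> real) \<Rightarrow> 'a set \<Rightarrow> real" where
  "inner_measure M \<mu> X = Sup {\<mu> Y | Y. Y \<in> M \<and> Y \<subseteq> X}"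

end

theory Submission
  imports Defs
begin

text \<open>If the translates of the commutator set by (1,1), (g\<inverse>,1), (1,h\<inverse>) and (g\<inverse>,h\<inverse>)
  share a point (x,y), then [gx,y] = [x,y] and [gx,hy] = [x,hy]. As [gx,y] = x\<inverse>[g,y]x [x,y],
  this says that g commutes with y and with hy, hence with h; and then c = [x,y] = 1.
  For the measure statement: k translates of a set of measure > 1 - 1/k have complements of
  total measure < 1, so by left invariance and finite subadditivity they intersect.\<close>

lemma (in group) r_inv_cancel_left [simp]:
  "x \<in> carrier G \<Longrightarrow> y \<in> carrier G \<Longrightarrow> x \<otimes> (inv x \<otimes> y) = y"
  by (simp add: m_assoc [symmetric])

lemma (in group) l_inv_cancel_left [simp]:
  "x \<in> carrier G \<Longrightarrow> y \<in> carrier G \<Longrightarrow> inv x \<otimes> (x \<otimes> y) = y"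
  by (simp add: m_assoc [symmetric])

lemma (in group) commutator_closed [simp]:
  "x \<in> carrier G \<Longrightarrow> y \<in> carrier G \<Longrightarrow> commutator G x y \<in> carrier G"
  by (simp add: commutator_def)

lemma (in group) commutator_eq_one_iff:
  assumes "x \<in> carrier G" "y \<in> carrier G"
  shows "commutator G x y = \<one> \<longleftrightarrow> x \<otimes> y = y \<otimes> x"
proof -
  have "commutator G x y = inv (y \<otimes> x) \<otimes> (x \<otimes> y)"
    using assms by (simp add: commutator_def inv_mult_group m_assoc)
  then show ?thesis
    using assms by (simp add: inv_solve_left')
qed

lemma (in group) commutator_mult_left:
  assumes "g \<in> carrier G" "x \<in> carrier G" "y \<in> carrier G"
  shows "commutator G (g \<otimes> x) y = inv x \<otimes> commutator G g y \<otimes> x \<otimes> commutator G x y"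
  using assms by (simp add: commutator_def inv_mult_group m_assoc)

lemma (in group) commutator_mult_left_eq_iff:
  assumes "g \<in> carrier G" "x \<in> carrier G" "y \<in> carrier G"
  shows "commutator G (g \<otimes> x) y = commutator G x y \<longleftrightarrow> g \<otimes> y = y \<otimes> g"
proof -
  have "commutator G (g \<otimes> x) y = commutator G x y \<longleftrightarrow> inv x \<otimes> commutator G g y \<otimes> x = \<one>"
    using assms by (simp add: commutator_mult_left)
  also have "\<dots> \<longleftrightarrow> commutator G g y = \<one>"
    using assms by (simp add: m_assoc inv_solve_left')
  finally show ?thesis
    using assms by (simp add: commutator_eq_one_iff)
qed

lemma (in group) commute_if_commutators_of_translates_eq:
  assumes "g \<in> carrier G" "h \<in> carrier G" "x \<in> carrier G" "y \<in> carrier G"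
    and "commutator G (g \<otimes> x) y = commutator G x y"
    and "commutator G (g \<otimes> x) (h \<otimes> y) = commutator G x (h \<otimes> y)"
  shows "g \<otimes> h = h \<otimes> g"
proof -
  have "g \<otimes> y = y \<otimes> g" "g \<otimes> (h \<otimes> y) = h \<otimes> y \<otimes> g"
    using assms by (simp_all add: commutator_mult_left_eq_iff)
  then have "g \<otimes> h \<otimes> y = h \<otimes> g \<otimes> y"
    using assms by (simp add: m_assoc)
  then show ?thesis
    using assms by simp
qed

lemma (in group) mem_l_coset_commutator_set:
  assumes "g \<in> carrier G" "h \<in> carrier G"
  shows "(p, q) \<in> (inv g, inv h) <#\<^bsub>G \<times>\<times> G\<^esub> commutator_set G c \<longleftrightarrow>
    p \<in> carrier G \<and> q \<in> carrier G \<and> commutator G (g \<otimes> p) (h \<otimes> q) = c"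
proof
  assume "(p, q) \<in> (inv g, inv h) <#\<^bsub>G \<times>\<times> G\<^esub> commutator_set G c"
  then obtain u v where "u \<in> carrier G" "v \<in> carrier G" "commutator G u v = c"
    and "p = inv g \<otimes> u" "q = inv h \<otimes> v"
    by (auto simp: l_coset_def commutator_set_def)
  then show "p \<in> carrier G \<and> q \<in> carrier G \<and> commutator G (g \<otimes> p) (h \<otimes> q) = c"
    using assms by simp
next
  assume "p \<in> carrier G \<and> q \<in> carrier G \<and> commutator G (g \<otimes> p) (h \<otimes> q) = c"
  then have "(g \<otimes> p, h \<otimes> q) \<in> commutator_set G c"
    and "(p, q) = (inv g, inv h) \<otimes>\<^bsub>G \<times>\<times> G\<^esub> (g \<otimes> p, h \<otimes> q)"
    using assms by (simp_all add: commutator_set_def)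
  then show "(p, q) \<in> (inv g, inv h) <#\<^bsub>G \<times>\<times> G\<^esub> commutator_set G c"
    unfolding l_coset_def by blast
qed

lemma k_largeD:
  "k_large K k X \<Longrightarrow> (\<And>i. i < k \<Longrightarrow> a i \<in> carrier K) \<Longrightarrow> (\<Inter>i<k. a i <#\<^bsub>K\<^esub> X) \<noteq> {}"
  unfolding k_large_def by blast

lemma (in group) comm_group_if_k_large_commutator_set:
  assumes "k_large (G \<times>\<times> G) 4 (commutator_set G c)"
  shows "comm_group G \<and> c = \<one>"
proof -
  have commute_and_c_is_commutator: "g \<otimes> h = h \<otimes> g \<and> (\<exists>p \<in> carrier G. \<exists>q \<in> carrier G. commutator G p q = c)"
    if g: "g \<in> carrier G" and h: "h \<in> carrier G" for g h
  proof -
    define gs hs where "gs = [\<one>, g, \<one>, g]" and "hs = [\<one>, \<one>, h, h]"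
    have gs: "gs ! i \<in> carrier G" and hs: "hs ! i \<in> carrier G" if "i < 4" for i
      using g h that by (auto simp: gs_def hs_def less_Suc_eq numeral_eq_Suc)
    have "(\<Inter>i<4. (inv (gs ! i), inv (hs ! i)) <#\<^bsub>G \<times>\<times> G\<^esub> commutator_set G c) \<noteq> {}"
      using gs hs by (intro k_largeD[OF assms]) simp
    then obtain p q
      where pq: "\<And>i. i < 4 \<Longrightarrow> (p, q) \<in> (inv (gs ! i), inv (hs ! i)) <#\<^bsub>G \<times>\<times> G\<^esub> commutator_set G c"
      by auto
    have p: "p \<in> carrier G" and q: "q \<in> carrier G"
      using pq[of 0] gs[of 0] hs[of 0] by (simp_all add: mem_l_coset_commutator_set)
    have "commutator G (gs ! i \<otimes> p) (hs ! i \<otimes> q) = c" if "i < 4" for i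
      using pq[OF that] gs[OF that] hs[OF that] by (simp add: mem_l_coset_commutator_set)
    from this[of 0] this[of 1] this[of 2] this[of 3]
    have "commutator G p q = c" "commutator G (g \<otimes> p) q = c"
      "commutator G p (h \<otimes> q) = c" "commutator G (g \<otimes> p) (h \<otimes> q) = c"
      using p q by (simp_all add: gs_def hs_def)
    then show ?thesis
      using commute_if_commutators_of_translates_eq[OF g h p q] p q by auto
  qed
  then interpret comm_group G
    by (intro group_comm_groupI) blast
  obtain p q where "p \<in> carrier G" "q \<in> carrier G" "commutator G p q = c"
    using commute_and_c_is_commutator[OF one_closed one_closed] by blast
  then show ?thesis
    using commutator_eq_one_iff m_comm comm_group_axioms by simp
qed

locale left_invariant_probability =
  fixes K :: "('a, 'b) monoid_scheme" and M :: "'a set set" and \<mu> :: "'a set \<Rightarrow> real"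
  assumes left_invariant_prob: "left_invariant_prob K M \<mu>"
begin

sublocale algebra "carrier K" M
  using left_invariant_prob unfolding left_invariant_prob_def by blast

lemma
  shows measure_nonneg: "Y \<in> M \<Longrightarrow> 0 \<le> \<mu> Y"
    and measure_additive: "Y \<in> M \<Longrightarrow> Z \<in> M \<Longrightarrow> Y \<inter> Z = {} \<Longrightarrow> \<mu> (Y \<union> Z) = \<mu> Y + \<mu> Z"
    and measure_carrier: "\<mu> (carrier K) = 1"
    and l_coset_sets: "g \<in> carrier K \<Longrightarrow> Y \<in> M \<Longrightarrow> g <#\<^bsub>K\<^esub> Y \<in> M"
    and measure_l_coset: "g \<in> carrier K \<Longrightarrow> Y \<in> M \<Longrightarrow> \<mu> (g <#\<^bsub>K\<^esub> Y) = \<mu> Y"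
  using left_invariant_prob unfolding left_invariant_prob_def by blast+

lemma measure_empty: "\<mu> {} = 0"
  using measure_additive[of "{}" "{}"] by simp

lemma measure_Un_le:
  assumes "A \<in> M" "B \<in> M"
  shows "\<mu> (A \<union> B) \<le> \<mu> A + \<mu> B"
proof -
  have "\<mu> (A \<union> B) = \<mu> A + \<mu> (B - A)"
    using measure_additive[of A "B - A"] assms by (simp add: Diff)
  moreover have "\<mu> B = \<mu> (B - A) + \<mu> (B \<inter> A)"
    using measure_additive[of "B - A" "B \<inter> A"] assms by (auto simp: Diff Int Un_Diff_Int)
  moreover have "0 \<le> \<mu> (B \<inter> A)"
    using measure_nonneg assms by blast
  ultimately show ?thesis
    by linarith
qed

lemma measure_UN_le:
  assumes "finite I" and "\<And>i. i \<in> I \<Longrightarrow> A i \<in> M"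
  shows "\<mu> (\<Union>i\<in>I. A i) \<le> (\<Sum>i\<in>I. \<mu> (A i))"
  using assms
proof (induction I rule: finite_induct)
  case empty
  then show ?case
    by (simp add: measure_empty)
next
  case (insert j I)
  then have "\<mu> (\<Union>i\<in>insert j I. A i) \<le> \<mu> (A j) + \<mu> (\<Union>i\<in>I. A i)"
    using measure_Un_le by (simp add: finite_UN)
  with insert show ?case
    by simp
qed

lemma measure_compl:
  assumes "A \<in> M"
  shows "\<mu> (carrier K - A) = 1 - \<mu> A"
proof -
  have "\<mu> ((carrier K - A) \<union> A) = \<mu> (carrier K - A) + \<mu> A"
    by (rule measure_additive) (use assms in blast)+
  moreover have "(carrier K - A) \<union> A = carrier K"
    using assms sets_into_space by blast
  ultimately show ?thesis
    using measure_carrier by simp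
qed

lemma translates_intersect_if_measure_gt:
  fixes k :: nat
  assumes Y: "Y \<in> M" and large: "\<mu> Y > 1 - 1 / k"
    and a: "\<And>i. i < k \<Longrightarrow> a i \<in> carrier K"
  shows "(\<Inter>i<k. a i <#\<^bsub>K\<^esub> Y) \<noteq> {}"
proof
  assume empty: "(\<Inter>i<k. a i <#\<^bsub>K\<^esub> Y) = {}"
  define C where "C i = carrier K - (a i <#\<^bsub>K\<^esub> Y)" for i
  have C: "C i \<in> M" "\<mu> (C i) = 1 - \<mu> Y" if "i < k" for i
    using that a Y l_coset_sets measure_l_coset measure_compl unfolding C_def by auto
  have "(\<Union>i<k. C i) = carrier K"
    using empty unfolding C_def by blast
  then have "1 = \<mu> (\<Union>i<k. C i)"
    using measure_carrier by simp
  also have "\<dots> \<le> (\<Sum>i<k. \<mu> (C i))"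
    by (rule measure_UN_le) (use C in auto)
  also have "\<dots> = k * (1 - \<mu> Y)"
    using C by simp
  also have "\<dots> < 1"
    using large by (cases "k = 0") (simp_all add: field_simps)
  finally show False
    by simp
qed

lemma k_large_if_measure_gt:
  fixes k :: nat
  assumes Y: "Y \<in> M" "Y \<subseteq> X" and X: "X \<subseteq> carrier K" and large: "\<mu> Y > 1 - 1 / k"
  shows "k_large K k X"
  unfolding k_large_def
proof (intro conjI allI impI X)
  fix a
  assume "\<forall>i<k. a i \<in> carrier K"
  then have "(\<Inter>i<k. a i <#\<^bsub>K\<^esub> Y) \<noteq> {}"
    using translates_intersect_if_measure_gt[OF Y(1) large] by blast
  moreover have "(\<Inter>i<k. a i <#\<^bsub>K\<^esub> Y) \<subseteq> (\<Inter>i<k. a i <#\<^bsub>K\<^esub> X)"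
    using Y(2) unfolding l_coset_def by blast
  ultimately show "(\<Inter>i<k. a i <#\<^bsub>K\<^esub> X) \<noteq> {}"
    by blast
qed

lemma inner_measure_le_if_not_k_large:
  fixes k :: nat
  assumes "X \<subseteq> carrier K" and "\<not> k_large K k X"
  shows "inner_measure M \<mu> X \<le> 1 - 1 / k"
  unfolding inner_measure_def
proof (rule cSup_least)
  show "{\<mu> Y |Y. Y \<in> M \<and> Y \<subseteq> X} \<noteq> {}"
    by blast
next
  fix r
  assume "r \<in> {\<mu> Y |Y. Y \<in> M \<and> Y \<subseteq> X}"
  then obtain Y where "Y \<in> M" "Y \<subseteq> X" "r = \<mu> Y"
    by blast
  then show "r \<le> 1 - 1 / k"
    using k_large_if_measure_gt[of Y X k] assms by linarith
qed

end

theorem corollary5p7: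
  fixes G :: "('a, 'b) monoid_scheme" and c :: 'a
  assumes "group G" and "c \<in> carrier G"
  shows "(k_large (G \<times>\<times> G) 4 (commutator_set G c) \<longrightarrow> comm_group G \<and> c = \<one>\<^bsub>G\<^esub>)
    \<and> (\<forall>M \<mu>. left_invariant_prob (G \<times>\<times> G) M \<mu> \<longrightarrow> (\<not> comm_group G \<or> c \<noteq> \<one>\<^bsub>G\<^esub>) \<longrightarrow>
          inner_measure M \<mu> (commutator_set G c) \<le> 3 / 4)"
proof (rule conjI)
  show "k_large (G \<times>\<times> G) 4 (commutator_set G c) \<longrightarrow> comm_group G \<and> c = \<one>\<^bsub>G\<^esub>"
    using group.comm_group_if_k_large_commutator_set[OF assms(1)] by blast
  show "\<forall>M \<mu>. left_invariant_prob (G \<times>\<times> G) M \<mu> \<longrightarrow> (\<not> comm_group G \<or> c \<noteq> \<one>\<^bsub>G\<^esub>) \<longrightarrow>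
          inner_measure M \<mu> (commutator_set G c) \<le> 3 / 4"
  proof (intro allI impI)
    fix M \<mu>
    assume "left_invariant_prob (G \<times>\<times> G) M \<mu>" and "\<not> comm_group G \<or> c \<noteq> \<one>\<^bsub>G\<^esub>"
    interpret left_invariant_probability "G \<times>\<times> G" M \<mu>
      by (rule left_invariant_probability.intro) fact
    have "\<not> k_large (G \<times>\<times> G) 4 (commutator_set G c)"
      using group.comm_group_if_k_large_commutator_set[OF assms(1)] \<open>\<not> comm_group G \<or> c \<noteq> \<one>\<^bsub>G\<^esub>\<close>
      by blast
    moreover have "commutator_set G c \<subseteq> carrier (G \<times>\<times> G)"
      by (auto simp: commutator_set_def)
    ultimately show "inner_measure M \<mu> (commutator_set G c) \<le> 3 / 4"
      using inner_measure_le_if_not_k_large[of _ 4] by simp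
  qed
qed

end
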